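(* Let $\Gamma$ be a locally finite connected $\delta$-hyperbolic graph with base vertex $x_0$, let $n\ge0$, let $A\in\mathcal{A}_n(\Gamma)$, and let $x\in\Gamma$. Then $x\in A$ if and only if both of the following hold: (1) $x\in C(p)$ for every $p\in N(A,B_n)$; (2) $d_x$ and $d_A$ differ by a constant on $P(A,S_n)$.
   Context: $\Gamma$ is identified with its vertex set with path metric $d$; $d_x(y)=d(x,y)$. $\delta$-hyperbolic means: for every geodesic triangle with sides $[a,b],[a,c],[b,c]$ and every vertex $v\in[a,b]$ there is a vertex $w\in[a,c]\cup[b,c]$ with $d(v,w)\le\delta$. Write $\ell(x)=d(x_0,x)$, $B_n=\{\ell\le n\}$, $S_n=\{\ell=n\}$, and let $C(p)=\{y:\ell(y)=\ell(p)+d(p,y)\}$ be the cone on $p$. For finite $B$, the atom of $x$ is $\{y: d_y-d_x \text{ is constant on } B\}$; $\mathcal{A}(B)$ is the set of atoms, and $\mathcal{A}_n(\Gamma)$ is the set of infinite atoms of $\mathcal{A}(B_n)$. For an atom $A$, $d_A$ means $d_y|_{B_n}$ for any $y\in A$ (well defined up to an additive constant). For finite $B$ and $y\in\Gamma$, $N(y,B)$ is the set of $p\in B$ with $d(p,y)\le d(q,y)$ for all $q\in B$. For $\ell(y)\ge n$, a point $p\in S_n$ is proximal to $y$ if there is a geodesic $p_0,\ldots,p_n$ from $x_0$ to $p$ such that $d(y_i,p_i)\le4\delta+2$ for all $i\le n$ and every geodesic $y_0=x_0,y_1,\ldots,y_{\ell(y)}=y$ from $x_0$ to $y$; $P(y,S_n)$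 is the set of such points. The sets $N(y,B_n)$ and $P(y,S_n)$ are the same for all $y\in A$, and are denoted $N(A,B_n)$ and $P(A,S_n)$. *)

theory Defs
  imports Complex_Main
begin

text \<open>A graph is given by an adjacency relation E on the vertex type 'a
  (the graph is identified with its vertex set, which is UNIV).\<close>

definition walk :: "('a \<Rightarrow> 'a \<Rightarrow> bool) \<Rightarrow> 'a list \<Rightarrow> bool" where
  "walk E g \<longleftrightarrow> g \<noteq> [] \<and> (\<forall>i. Suc i < length g \<longrightarrow> E (g ! i) (g ! Suc i))"

definition walk_from :: "('a \<Rightarrow> 'a \<Rightarrow> bool) \<Rightarrow> 'a \<Rightarrow> 'a \<Rightarrow> 'a list \<Rightarrow> bool" where
  "walk_from E x y g \<longleftrightarrow> walk E g \<and> hd g = x \<and> last g = y"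

definition connected_graph :: "('a \<Rightarrow> 'a \<Rightarrow> bool) \<Rightarrow> bool" where
  "connected_graph E \<longleftrightarrow> (\<forall>x y. \<exists>g. walk_from E x y g)"

definition locally_finite :: "('a \<Rightarrow> 'a \<Rightarrow> bool) \<Rightarrow> bool" where
  "locally_finite E \<longleftrightarrow> (\<forall>x. finite {y. E x y})"

definition dist_g :: "('a \<Rightarrow> 'a \<Rightarrow> bool) \<Rightarrow> 'a \<Rightarrow> 'a \<Rightarrow> nat" where
  "dist_g E x y = (LEAST n. \<exists>g. walk_from E x y g \<and> length g = Suc n)"

text \<open>A geodesic from a to b, as its list of vertices a = g!0, ..., g!(d a b) = b.\<close>
definition geodesic :: "('a \<Rightarrow> 'a \<Rightarrow> bool) \<Rightarrow> 'a \<Rightarrow> 'a \<Rightarrow> 'a list \<Rightarrow> bool" where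
  "geodesic E a b g \<longleftrightarrow> walk_from E a b g \<and> length g = Suc (dist_g E a b)"

definition hyperbolic :: "('a \<Rightarrow> 'a \<Rightarrow> bool) \<Rightarrow> real \<Rightarrow> bool" where
  "hyperbolic E \<delta> \<longleftrightarrow>
     (\<forall>a b c gab gac gbc. geodesic E a b gab \<and> geodesic E a c gac \<and> geodesic E b c gbc \<longrightarrow>
        (\<forall>v \<in> set gab. \<exists>w \<in> set gac \<union> set gbc. real (dist_g E v w) \<le> \<delta>))"

definition lev :: "('a \<Rightarrow> 'a \<Rightarrow> bool) \<Rightarrow> 'a \<Rightarrow> 'a \<Rightarrow> nat" where
  "lev E x0 x = dist_g E x0 x"

definition ball_n :: "('a \<Rightarrow> 'a \<Rightarrow> bool) \<Rightarrow> 'a \<Rightarrow> nat \<Rightarrow> 'a set" where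
  "ball_n E x0 n = {x. lev E x0 x \<le> n}"

definition sphere_n :: "('a \<Rightarrow> 'a \<Rightarrow> bool) \<Rightarrow> 'a \<Rightarrow> nat \<Rightarrow> 'a set" where
  "sphere_n E x0 n = {x. lev E x0 x = n}"

definition cone :: "('a \<Rightarrow> 'a \<Rightarrow> bool) \<Rightarrow> 'a \<Rightarrow> 'a \<Rightarrow> 'a set" where
  "cone E x0 p = {y. lev E x0 y = lev E x0 p + dist_g E p y}"

definition atom :: "('a \<Rightarrow> 'a \<Rightarrow> bool) \<Rightarrow> 'a set \<Rightarrow> 'a \<Rightarrow> 'a set" where
  "atom E B x = {y. \<exists>c::int. \<forall>b\<in>B. int (dist_g E y b) - int (dist_g E x b) = c}"

definition atoms :: "('a \<Rightarrow> 'a \<Rightarrow> bool) \<Rightarrow> 'a set \<Rightarrow> 'a set set" where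
  "atoms E B = {atom E B x | x. True}"

definition inf_atoms :: "('a \<Rightarrow> 'a \<Rightarrow> bool) \<Rightarrow> 'a \<Rightarrow> nat \<Rightarrow> 'a set set" where
  "inf_atoms E x0 n = {A \<in> atoms E (ball_n E x0 n). infinite A}"

definition nearest :: "('a \<Rightarrow> 'a \<Rightarrow> bool) \<Rightarrow> 'a \<Rightarrow> 'a set \<Rightarrow> 'a set" where
  "nearest E y B = {p \<in> B. \<forall>q\<in>B. dist_g E p y \<le> dist_g E q y}"

definition proximal :: "('a \<Rightarrow> 'a \<Rightarrow> bool) \<Rightarrow> real \<Rightarrow> 'a \<Rightarrow> 'a \<Rightarrow> nat \<Rightarrow> 'a set" where
  "proximal E \<delta> x0 y n = {p \<in> sphere_n E x0 n.
     \<exists>pg. geodesic E x0 p pg \<and>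
       (\<forall>yg. geodesic E x0 y yg \<longrightarrow>
          (\<forall>i\<le>n. real (dist_g E (yg ! i) (pg ! i)) \<le> 4 * \<delta> + 2))}"

definition nearest_atom :: "('a \<Rightarrow> 'a \<Rightarrow> bool) \<Rightarrow> 'a set \<Rightarrow> 'a set \<Rightarrow> 'a set" where
  "nearest_atom E A B = nearest E (SOME y. y \<in> A) B"

definition proximal_atom :: "('a \<Rightarrow> 'a \<Rightarrow> bool) \<Rightarrow> real \<Rightarrow> 'a \<Rightarrow> 'a set \<Rightarrow> nat \<Rightarrow> 'a set" where
  "proximal_atom E \<delta> x0 A n = proximal E \<delta> x0 (SOME y. y \<in> A) n"

text \<open>d_A: d_y for a representative y of A (well defined up to an additive constant on B_n).\<close>
definition dist_atom :: "('a \<Rightarrow> 'a \<Rightarrow> bool) \<Rightarrow> 'a set \<Rightarrow> 'a \<Rightarrow> nat" where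
  "dist_atom E A b = dist_g E (SOME y. y \<in> A) b"

end

(*
  For y in the infinite atom A, x lies in A iff d_x - d_y is constant on B_n; and y lies
  outside B_(n-1), because a point of B_(n-1) is alone in its atom. If d_x - d_y is constant
  on B_n, comparing its values at x0 and at a nearest point p of y gives x in C(p).
  Conversely, the cone condition lets the segment up to S_n of any geodesic from x0 to y be
  continued to a geodesic from x0 to x, so P(x, S_n) is contained in P(y, S_n). By thinness of
  triangles, a geodesic from a point z outside B_(n-1) to b in B_n passes through a point of
  P(z, S_n), namely where it first meets S_n. Routing d_x(b) and d_y(b) through such points
  squeezes d_x(b) - d_y(b) onto the constant value of d_x - d_y on P(y, S_n).
*)
theory Submission
  imports Defs
begin

lemma walk_Cons_iff: "walk E (a # xs) \<longleftrightarrow> xs = [] \<or> E a (hd xs) \<and> walk E xs"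
  by (cases xs) (auto simp: walk_def nth_Cons split: nat.splits)

lemma walk_append_tl: "walk E xs \<Longrightarrow> walk E ys \<Longrightarrow> last xs = hd ys \<Longrightarrow> walk E (xs @ tl ys)"
proof (induction xs)
  case Nil then show ?case by (simp add: walk_def)
next
  case (Cons a xs)
  show ?case
  proof (cases "xs = []")
    case True
    then show ?thesis using Cons.prems by (cases ys) (auto simp: walk_def)
  next
    case False
    then show ?thesis using Cons by (simp add: walk_Cons_iff)
  qed
qed

lemma walk_rev:
  assumes sym: "\<And>u v. E u v \<Longrightarrow> E v u" and w: "walk E g"
  shows "walk E (rev g)"
  unfolding walk_def
proof (intro conjI allI impI)
  show "rev g \<noteq> []" using w by (simp add: walk_def)
  fix i assume i: "Suc i < length (rev g)"
  let ?l = "length g"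
  have "E (g ! (?l - Suc (Suc i))) (g ! Suc (?l - Suc (Suc i)))"
    using w i unfolding walk_def by simp
  moreover have "Suc (?l - Suc (Suc i)) = ?l - Suc i" using i by simp
  ultimately have "E (g ! (?l - Suc i)) (g ! (?l - Suc (Suc i)))" using sym by metis
  then show "E (rev g ! i) (rev g ! Suc i)" using i by (simp add: rev_nth)
qed

lemma walk_take: "walk E g \<Longrightarrow> 0 < k \<Longrightarrow> walk E (take k g)"
  unfolding walk_def by auto

lemma walk_drop: "walk E g \<Longrightarrow> k < length g \<Longrightarrow> walk E (drop k g)"
  unfolding walk_def by auto

lemma walk_from_append:
  assumes "walk_from E a b g" and "walk_from E b c h"
  shows "walk_from E a c (g @ tl h)"
proof -
  have ne: "g \<noteq> []" "h \<noteq> []" using assms by (auto simp: walk_from_def walk_def)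
  have "last (g @ tl h) = c"
  proof (cases "tl h = []")
    case True
    then have "h = [b]" using ne assms(2) by (cases h) (auto simp: walk_from_def)
    then show ?thesis using True assms by (simp add: walk_from_def)
  next
    case False
    then show ?thesis using assms(2) by (simp add: walk_from_def last_tl)
  qed
  then show ?thesis using assms ne walk_append_tl[of E g h] by (simp add: walk_from_def)
qed

lemma dist_le_walk_length: "walk_from E x y g \<Longrightarrow> dist_g E x y \<le> length g - 1"
  unfolding dist_g_def
  by (rule Least_le) (auto simp: walk_from_def walk_def intro!: exI[of _ g])

lemma walk_nth_dist_le:
  assumes w: "walk E g" and ij: "i \<le> j" "j < length g"
  shows "dist_g E (g ! i) (g ! j) \<le> j - i"
proof -
  let ?s = "take (Suc (j - i)) (drop i g)"
  have "walk E (drop i g)" using w ij walk_drop by force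
  then have "walk E ?s" using walk_take by blast
  moreover have "hd ?s = g ! i" using ij by (simp add: hd_drop_conv_nth)
  moreover have "last ?s = g ! j" using ij by (simp add: last_conv_nth)
  ultimately have "walk_from E (g ! i) (g ! j) ?s" by (simp add: walk_from_def)
  then show ?thesis using dist_le_walk_length[of E] ij by fastforce
qed

lemma dist_g_self [simp]: "dist_g E x x = 0"
  using dist_le_walk_length[of E x x "[x]"] by (simp add: walk_from_def walk_def)

definition thin_triangles :: "('a \<Rightarrow> 'a \<Rightarrow> bool) \<Rightarrow> nat \<Rightarrow> bool" where
  "thin_triangles E D \<longleftrightarrow>
     (\<forall>a b c gab gac gbc. geodesic E a b gab \<and> geodesic E a c gac \<and> geodesic E b c gbc \<longrightarrow>
        (\<forall>v \<in> set gab. \<exists>w \<in> set gac \<union> set gbc. dist_g E v w \<le> D))"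

lemma hyperbolic_nonneg:
  assumes "hyperbolic E \<delta>" shows "0 \<le> \<delta>"
proof -
  fix x
  have "geodesic E x x [x]" by (simp add: geodesic_def walk_from_def walk_def)
  then show ?thesis using assms unfolding hyperbolic_def by fastforce
qed

lemma hyperbolic_thin_triangles: "hyperbolic E \<delta> \<Longrightarrow> thin_triangles E (nat \<lfloor>\<delta>\<rfloor>)"
  unfolding hyperbolic_def thin_triangles_def by (metis le_nat_floor)

locale connected_ugraph =
  fixes E :: "'a \<Rightarrow> 'a \<Rightarrow> bool"
  assumes sym: "\<And>u v. E u v \<Longrightarrow> E v u"
    and conn: "connected_graph E"
begin

abbreviation d :: "'a \<Rightarrow> 'a \<Rightarrow> nat" where "d \<equiv> dist_g E"

lemma geodesic_exists: "\<exists>g. geodesic E x y g"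
proof -
  obtain g where "walk_from E x y g" using conn unfolding connected_graph_def by blast
  moreover have "length g = Suc (length g - 1)"
    using \<open>walk_from E x y g\<close> by (cases g) (auto simp: walk_from_def walk_def)
  ultimately have "\<exists>n g. walk_from E x y g \<and> length g = Suc n" by blast
  then have "\<exists>g. walk_from E x y g \<and> length g = Suc (d x y)"
    unfolding dist_g_def by (rule LeastI_ex)
  then show ?thesis unfolding geodesic_def by blast
qed

lemma geodesic_walk: "geodesic E a b g \<Longrightarrow> walk E g"
  unfolding geodesic_def walk_from_def by simp

lemma geodesic_nth_0: "geodesic E a b g \<Longrightarrow> g ! 0 = a"
  unfolding geodesic_def walk_from_def walk_def by (auto simp: hd_conv_nth)

lemma geodesic_start_in_set: "geodesic E a b g \<Longrightarrow> a \<in> set g"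
  unfolding geodesic_def walk_from_def walk_def by auto

lemma dist_commute: "d x y = d y x"
proof -
  have "d y x \<le> d x y" for x y
  proof -
    obtain g where g: "geodesic E x y g" using geodesic_exists by blast
    then have "walk_from E y x (rev g)"
      using walk_rev[OF sym] unfolding geodesic_def walk_from_def by (auto simp: hd_rev last_rev)
    then show ?thesis using dist_le_walk_length g unfolding geodesic_def by fastforce
  qed
  then show ?thesis by (metis le_antisym)
qed

lemma dist_triangle: "d x z \<le> d x y + d y z"
proof -
  obtain g h where g: "geodesic E x y g" and h: "geodesic E y z h"
    using geodesic_exists by blast
  then have "walk_from E x z (g @ tl h)"
    using walk_from_append[of E x y g z h] unfolding geodesic_def by blast
  then have "d x z \<le> length (g @ tl h) - 1" by (rule dist_le_walk_length)
  also have "\<dots> = d x y + d y z" using g h unfolding geodesic_def by simp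
  finally show ?thesis .
qed

lemma dist_eq_0_imp_eq: "d x y = 0 \<Longrightarrow> x = y"
proof -
  assume "d x y = 0"
  obtain g where g: "geodesic E x y g" using geodesic_exists by blast
  then obtain a where "g = [a]" using \<open>d x y = 0\<close> by (cases g) (auto simp: geodesic_def)
  then show "x = y" using g by (auto simp: geodesic_def walk_from_def)
qed

lemma walk_nth_dist_le_abs:
  assumes w: "walk E g" and "i < length g" "j < length g"
  shows "int (d (g ! i) (g ! j)) \<le> \<bar>int i - int j\<bar>"
proof (cases "i \<le> j")
  case True
  then show ?thesis using walk_nth_dist_le[of E g i j] w assms by simp
next
  case False
  then have "d (g ! j) (g ! i) \<le> i - j" using walk_nth_dist_le[of E g j i] w assms by simp
  then show ?thesis using False dist_commute[of "g ! i" "g ! j"] by simp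
qed

lemma geodesic_nth_dist:
  assumes g: "geodesic E a b g" and i: "i < length g"
  shows "d a (g ! i) = i" and "d (g ! i) b = length g - 1 - i"
proof -
  have w: "walk E g" and len: "length g = Suc (d a b)" and "g \<noteq> []"
    using g by (auto simp: geodesic_def walk_from_def walk_def)
  then have "g ! 0 = a" "g ! (length g - 1) = b"
    using g by (auto simp: geodesic_def walk_from_def hd_conv_nth last_conv_nth)
  then have "d a (g ! i) \<le> i" "d (g ! i) b \<le> length g - 1 - i"
    using walk_nth_dist_le[of E g 0 i] walk_nth_dist_le[of E g i "length g - 1"] w i by auto
  moreover have "d a b \<le> d a (g ! i) + d (g ! i) b" by (rule dist_triangle)
  ultimately show "d a (g ! i) = i" "d (g ! i) b = length g - 1 - i" using len i by linarith+
qed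

lemma geodesic_take:
  assumes g: "geodesic E a b g" and k: "k < length g"
  shows "geodesic E a (g ! k) (take (Suc k) g)"
proof -
  have "walk E (take (Suc k) g)" using walk_take[of E g "Suc k"] geodesic_walk[OF g] by simp
  moreover have "hd (take (Suc k) g) = a" using g k by (auto simp: geodesic_def walk_from_def)
  moreover have "last (take (Suc k) g) = g ! k" using k by (simp add: take_Suc_conv_app_nth)
  moreover have "length (take (Suc k) g) = Suc (d a (g ! k))"
    using geodesic_nth_dist(1)[OF g k] k by simp
  ultimately show ?thesis by (simp add: geodesic_def walk_from_def)
qed

lemma geodesic_append:
  assumes "geodesic E a b g" and "geodesic E b c h" and "d a c = d a b + d b c"
  shows "geodesic E a c (g @ tl h)"
  using assms walk_from_append[of E a b g c h] by (auto simp: geodesic_def)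

lemma lev_le_lev_add_dist: "lev E x0 u \<le> lev E x0 v + d u v"
  unfolding lev_def using dist_triangle[of x0 u v] dist_commute[of u v] by simp

lemma lev_geodesic_nth: "geodesic E x0 z g \<Longrightarrow> i < length g \<Longrightarrow> lev E x0 (g ! i) = i"
  unfolding lev_def using geodesic_nth_dist(1) by blast

lemma length_geodesic_from_base: "geodesic E x0 z g \<Longrightarrow> length g = Suc (lev E x0 z)"
  unfolding geodesic_def lev_def by simp

text \<open>Below level n - D, a point of g is D-close to a point of the triangle with sides g, h,
  gm; it cannot be a point of gm, whose levels are at least n, so it is a point of h at about
  the same level.\<close>

lemma geodesics_close_below_sphere:
  assumes thin: "thin_triangles E D"
    and g: "geodesic E x0 z g" and h: "geodesic E x0 q h" and gm: "geodesic E z q gm"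
    and lq: "lev E x0 q = n" and lw: "\<forall>w \<in> set gm. n \<le> lev E x0 w"
    and j: "j + D < n"
  shows "d (g ! j) (h ! j) \<le> 2 * D"
proof -
  have "n \<le> lev E x0 z" using lw geodesic_start_in_set[OF gm] by blast
  then have jg: "j < length g" using length_geodesic_from_base[OF g] j by simp
  then obtain w where w: "w \<in> set h \<union> set gm" "d (g ! j) w \<le> D"
    using thin g h gm nth_mem unfolding thin_triangles_def by blast
  have lgj: "lev E x0 (g ! j) = j" using lev_geodesic_nth[OF g jg] .
  then have "lev E x0 w \<le> j + D"
    using lev_le_lev_add_dist[of x0 w "g ! j"] w(2) dist_commute[of w "g ! j"] by simp
  then have "w \<in> set h" using w(1) lw j by fastforce
  then obtain k where k: "k < length h" "h ! k = w" by (metis in_set_conv_nth)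
  have "lev E x0 w = k" using lev_geodesic_nth[OF h k(1)] k(2) by simp
  then have kj: "\<bar>int k - int j\<bar> \<le> int D"
    using lev_le_lev_add_dist[of x0 w "g ! j"] lev_le_lev_add_dist[of x0 "g ! j" w]
      lgj w(2) dist_commute[of w "g ! j"] by linarith
  have "j < length h" using length_geodesic_from_base[OF h] lq j by simp
  then have "int (d (h ! k) (h ! j)) \<le> \<bar>int k - int j\<bar>"
    using walk_nth_dist_le_abs[OF geodesic_walk[OF h] k(1)] by blast
  moreover have "d (g ! j) (h ! j) \<le> d (g ! j) (h ! k) + d (h ! k) (h ! j)" by (rule dist_triangle)
  moreover have "d (g ! j) (h ! k) \<le> D" using w(2) k(2) by simp
  ultimately show ?thesis using kj by linarith
qed

lemma geodesics_fellow_travel: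
  assumes thin: "thin_triangles E D"
    and g: "geodesic E x0 z g" and h: "geodesic E x0 q h" and gm: "geodesic E z q gm"
    and lq: "lev E x0 q = n" and lw: "\<forall>w \<in> set gm. n \<le> lev E x0 w"
    and i: "i \<le> n"
  shows "d (g ! i) (h ! i) \<le> 4 * D + 2"
proof -
  have "n \<le> lev E x0 z" using lw geodesic_start_in_set[OF gm] by blast
  then have lg: "n < length g" using length_geodesic_from_base[OF g] by simp
  have lh: "n < length h" using length_geodesic_from_base[OF h] lq by simp
  have wg: "walk E g" and wh: "walk E h" using g h geodesic_walk by auto
  have close: "d (g ! i) (h ! i) \<le> d (g ! j) (h ! j) + 2 * (i - j)" if "j \<le> i" for j
  proof -
    have "d (g ! i) (g ! j) \<le> i - j" "d (h ! j) (h ! i) \<le> i - j"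
      using walk_nth_dist_le[of E g j i] walk_nth_dist_le[of E h j i] wg wh that i lg lh
        dist_commute[of "g ! i" "g ! j"] by auto
    moreover have "d (g ! i) (h ! i) \<le> d (g ! i) (g ! j) + d (g ! j) (h ! j) + d (h ! j) (h ! i)"
      using dist_triangle[of "g ! i" "h ! i" "g ! j"] dist_triangle[of "g ! j" "h ! i" "h ! j"]
      by linarith
    ultimately show ?thesis by linarith
  qed
  consider "i + D < n" | "n \<le> D" | "D < n" "n \<le> i + D" by linarith
  then show ?thesis
  proof cases
    case 1
    then show ?thesis using geodesics_close_below_sphere[OF assms(1-6)] by fastforce
  next
    case 2
    then show ?thesis using close[of 0] geodesic_nth_0[OF g] geodesic_nth_0[OF h] i by simp
  next
    case 3
    then have "n - D - 1 \<le> i" "n - D - 1 + D < n" "i - (n - D - 1) \<le> D + 1"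
      using i by linarith+
    then show ?thesis
      using close[of "n - D - 1"] geodesics_close_below_sphere[OF assms(1-6), of "n - D - 1"]
      by linarith
  qed
qed

lemma geodesic_crosses_sphere:
  assumes lz: "n \<le> lev E x0 z" and lb: "lev E x0 b \<le> n"
  obtains q gm where "geodesic E z q gm" and "lev E x0 q = n"
    and "\<forall>w \<in> set gm. n \<le> lev E x0 w" and "d z b = d z q + d q b"
proof -
  obtain \<gamma> where ga: "geodesic E z b \<gamma>" using geodesic_exists by blast
  have wg: "walk E \<gamma>" using geodesic_walk[OF ga] .
  have ne: "\<gamma> \<noteq> []" using wg walk_def by blast
  have gl: "\<gamma> ! (length \<gamma> - 1) = b"
    using ga ne unfolding geodesic_def walk_from_def by (metis last_conv_nth)
  define P where "P k \<longleftrightarrow> k < length \<gamma> \<and> lev E x0 (\<gamma> ! k) \<le> n" for k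
  define k where "k = (LEAST k. P k)"
  have Pk: "P k" unfolding k_def using gl lb ne by (intro LeastI[of P "length \<gamma> - 1"]) (simp add: P_def)
  then have kl: "k < length \<gamma>" by (simp add: P_def)
  have above: "n < lev E x0 (\<gamma> ! j)" if "j < k" for j
  proof -
    have "\<not> P j" using not_less_Least[of j P] that unfolding k_def by blast
    then show ?thesis using that kl unfolding P_def by simp
  qed
  have lk: "lev E x0 (\<gamma> ! k) = n"
  proof (cases k)
    case 0 then show ?thesis using Pk geodesic_nth_0[OF ga] lz unfolding P_def by simp
  next
    case (Suc j)
    then have "d (\<gamma> ! k) (\<gamma> ! j) \<le> 1"
      using walk_nth_dist_le[of E \<gamma> j k] wg kl dist_commute by simp
    then show ?thesis
      using Pk above[of j] Suc lev_le_lev_add_dist[of x0 "\<gamma> ! j" "\<gamma> ! k"] dist_commute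
      unfolding P_def by fastforce
  qed
  show ?thesis
  proof
    show "geodesic E z (\<gamma> ! k) (take (Suc k) \<gamma>)" using geodesic_take[OF ga kl] .
    show "lev E x0 (\<gamma> ! k) = n" by (rule lk)
    show "\<forall>w \<in> set (take (Suc k) \<gamma>). n \<le> lev E x0 w"
      using above lk by (auto simp: in_set_conv_nth less_Suc_eq less_imp_le)
    show "d z b = d z (\<gamma> ! k) + d (\<gamma> ! k) b"
      using geodesic_nth_dist[OF ga kl] kl ga unfolding geodesic_def by simp
  qed
qed

lemma proximal_on_geodesic_to_ball:
  assumes thin: "thin_triangles E D" and Dd: "real D \<le> \<delta>"
    and lz: "n \<le> lev E x0 z" and lb: "lev E x0 b \<le> n"
  shows "\<exists>q \<in> proximal E \<delta> x0 z n. d z b = d z q + d q b"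
proof -
  obtain q gm where gm: "geodesic E z q gm" and lq: "lev E x0 q = n"
    and lw: "\<forall>w \<in> set gm. n \<le> lev E x0 w" and split: "d z b = d z q + d q b"
    using geodesic_crosses_sphere[OF lz lb] .
  obtain h where h: "geodesic E x0 q h" using geodesic_exists by blast
  have "q \<in> proximal E \<delta> x0 z n"
    unfolding proximal_def sphere_n_def
  proof (intro CollectI conjI exI allI impI)
    show "lev E x0 q = n" by (rule lq)
    show "geodesic E x0 q h" by (rule h)
    fix g i assume "geodesic E x0 z g" "i \<le> n"
    then have "d (g ! i) (h ! i) \<le> 4 * D + 2"
      using geodesics_fellow_travel[OF thin _ h gm lq lw] by blast
    then show "real (d (g ! i) (h ! i)) \<le> 4 * \<delta> + 2" using Dd by linarith
  qed
  then show ?thesis using split by blast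
qed

lemma geodesic_nth_nearest:
  assumes g: "geodesic E x0 y g" and n: "n \<le> lev E x0 y"
  shows "g ! n \<in> nearest E y (ball_n E x0 n)" and "d (g ! n) y = lev E x0 y - n"
proof -
  have nl: "n < length g" using length_geodesic_from_base[OF g] n by simp
  show dy: "d (g ! n) y = lev E x0 y - n"
    using geodesic_nth_dist(2)[OF g nl] length_geodesic_from_base[OF g] by simp
  have "d (g ! n) y \<le> d q y" if "lev E x0 q \<le> n" for q
    using that dy lev_le_lev_add_dist[of x0 y q] dist_commute[of q y] by linarith
  then show "g ! n \<in> nearest E y (ball_n E x0 n)"
    using lev_geodesic_nth[OF g nl] by (simp add: nearest_def ball_n_def)
qed

lemma nearest_ball_on_sphere:
  assumes n: "n \<le> lev E x0 y" and p: "p \<in> nearest E y (ball_n E x0 n)"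
  shows "lev E x0 p = n" and "d p y = lev E x0 y - n"
proof -
  obtain g where g: "geodesic E x0 y g" using geodesic_exists by blast
  have "g ! n \<in> ball_n E x0 n" using geodesic_nth_nearest(1)[OF g n] unfolding nearest_def by simp
  then have "d p y \<le> lev E x0 y - n"
    using p geodesic_nth_nearest(2)[OF g n] unfolding nearest_def by fastforce
  moreover have "lev E x0 p \<le> n" using p unfolding nearest_def ball_n_def by simp
  moreover have "lev E x0 y \<le> lev E x0 p + d p y" unfolding lev_def by (rule dist_triangle)
  ultimately show "lev E x0 p = n" "d p y = lev E x0 y - n" using n by linarith+
qed

text \<open>If x lies in the cone of the point where a geodesic from x0 to y crosses S_n, that
  initial piece extends to a geodesic from x0 to x; so every geodesic to y is, up to level n,
  an initial piece of a geodesic to x.\<close>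

lemma proximal_subset_if_cones:
  assumes n: "n \<le> lev E x0 y"
    and cones: "\<forall>p \<in> nearest E y (ball_n E x0 n). x \<in> cone E x0 p"
  shows "proximal E \<delta> x0 x n \<subseteq> proximal E \<delta> x0 y n"
proof
  fix q assume "q \<in> proximal E \<delta> x0 x n"
  then obtain h where q: "q \<in> sphere_n E x0 n" and h: "geodesic E x0 q h"
    and hx: "\<forall>g. geodesic E x0 x g \<longrightarrow> (\<forall>i\<le>n. real (d (g ! i) (h ! i)) \<le> 4 * \<delta> + 2)"
    unfolding proximal_def by blast
  show "q \<in> proximal E \<delta> x0 y n"
    unfolding proximal_def
  proof (intro CollectI conjI exI allI impI)
    show "q \<in> sphere_n E x0 n" by (rule q)
    show "geodesic E x0 q h" by (rule h)
    fix g i assume g: "geodesic E x0 y g" and i: "i \<le> n"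
    have nl: "n < length g" using length_geodesic_from_base[OF g] n by simp
    have "g ! n \<in> nearest E y (ball_n E x0 n)" using geodesic_nth_nearest(1)[OF g n] .
    then have "lev E x0 x = d x0 (g ! n) + d (g ! n) x"
      using cones lev_geodesic_nth[OF g nl] unfolding cone_def lev_def by auto
    moreover obtain g2 where g2: "geodesic E (g ! n) x g2" using geodesic_exists by blast
    ultimately have "geodesic E x0 x (take (Suc n) g @ tl g2)"
      using geodesic_append[OF geodesic_take[OF g nl] g2] unfolding lev_def by simp
    moreover have "(take (Suc n) g @ tl g2) ! i = g ! i" using i nl by (simp add: nth_append)
    ultimately show "real (d (g ! i) (h ! i)) \<le> 4 * \<delta> + 2" using hx i by metis
  qed
qed

lemma atom_iff_dist_diff_const:
  assumes "y \<in> atom E B z0"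
  shows "x \<in> atom E B z0 \<longleftrightarrow> (\<exists>c::int. \<forall>b\<in>B. int (d x b) - int (d y b) = c)"
proof -
  obtain c1 where c1: "\<forall>b\<in>B. int (d y b) - int (d z0 b) = c1"
    using assms unfolding atom_def by blast
  show ?thesis
  proof
    assume "x \<in> atom E B z0"
    then obtain c2 where "\<forall>b\<in>B. int (d x b) - int (d z0 b) = c2" unfolding atom_def by blast
    then have "\<forall>b\<in>B. int (d x b) - int (d y b) = c2 - c1" using c1 by fastforce
    then show "\<exists>c::int. \<forall>b\<in>B. int (d x b) - int (d y b) = c" by blast
  next
    assume "\<exists>c::int. \<forall>b\<in>B. int (d x b) - int (d y b) = c"
    then obtain c2 where "\<forall>b\<in>B. int (d x b) - int (d y b) = c2" by blast
    then have "\<forall>b\<in>B. int (d x b) - int (d z0 b) = c2 + c1" using c1 by fastforce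
    then show "x \<in> atom E B z0" unfolding atom_def by blast
  qed
qed

text \<open>A point y strictly inside B_n is alone in its atom: any other point w of the atom
  would give d_w - d_y the same value at y and at the next vertex u of a geodesic from y to w,
  although d_w drops by one and d_y grows by one.\<close>

lemma atom_inside_ball_singleton:
  assumes y: "y \<in> atom E (ball_n E x0 n) z0" and ly: "lev E x0 y < n"
    and w: "w \<in> atom E (ball_n E x0 n) z0"
  shows "w = y"
proof (rule ccontr)
  assume "w \<noteq> y"
  then have dyw: "0 < d y w" using dist_eq_0_imp_eq[of y w] by (cases "d y w") auto
  obtain c where c: "\<forall>b\<in>ball_n E x0 n. int (d w b) - int (d y b) = c"
    using atom_iff_dist_diff_const[OF y] w by blast
  obtain \<gamma> where ga: "geodesic E y w \<gamma>" using geodesic_exists by blast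
  have len: "1 < length \<gamma>" using ga dyw unfolding geodesic_def by simp
  define u where "u = \<gamma> ! 1"
  have dyu: "d y u = 1" and duw: "d u w = d y w - 1"
    using geodesic_nth_dist[OF ga len] ga unfolding u_def geodesic_def by simp_all
  have "lev E x0 u \<le> lev E x0 y + d y u" unfolding lev_def by (rule dist_triangle)
  then have "u \<in> ball_n E x0 n" "y \<in> ball_n E x0 n"
    using ly dyu unfolding ball_n_def by simp_all
  then have "int (d w y) - int (d y y) = c" "int (d w u) - int (d y u) = c" using c by blast+
  then show False using dyu duw dyw dist_commute[of w y] dist_commute[of w u] by simp
qed

lemma infinite_atom_outside_ball:
  assumes "infinite (atom E (ball_n E x0 n) z0)" and "y \<in> atom E (ball_n E x0 n) z0"
  shows "n \<le> lev E x0 y"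
proof (rule ccontr)
  assume "\<not> n \<le> lev E x0 y"
  then have "atom E (ball_n E x0 n) z0 \<subseteq> {y}"
    using atom_inside_ball_singleton[OF assms(2)] by auto
  then show False using assms(1) finite_subset by blast
qed

lemma cone_if_dist_diff_const:
  assumes n: "n \<le> lev E x0 y"
    and c: "\<forall>b\<in>ball_n E x0 n. int (d x b) - int (d y b) = c"
    and p: "p \<in> nearest E y (ball_n E x0 n)"
  shows "x \<in> cone E x0 p"
proof -
  have lp: "lev E x0 p = n" and dpy: "d p y = lev E x0 y - n"
    using nearest_ball_on_sphere[OF n p] by auto
  have "x0 \<in> ball_n E x0 n" "p \<in> ball_n E x0 n"
    using p unfolding ball_n_def nearest_def lev_def by auto
  then have "int (d x x0) - int (d y x0) = int (d x p) - int (d y p)" using c by simp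
  then have "lev E x0 x = lev E x0 p + d p x"
    using lp dpy n dist_commute[of x x0] dist_commute[of y x0] dist_commute[of y p]
      dist_commute[of x p] unfolding lev_def by linarith
  then show ?thesis unfolding cone_def by simp
qed

text \<open>A geodesic from x to b through q \<in> P(x, S_n) \<subseteq> P(y, S_n) gives
  d_x(b) - d_y(b) \<ge> c, and one from y to b through q' \<in> P(y, S_n) gives \<le> c.\<close>

lemma dist_diff_const_on_ball:
  assumes thin: "thin_triangles E D" and Dd: "real D \<le> \<delta>"
    and lx: "n \<le> lev E x0 x" and ly: "n \<le> lev E x0 y"
    and sub: "proximal E \<delta> x0 x n \<subseteq> proximal E \<delta> x0 y n"
    and c: "\<forall>p \<in> proximal E \<delta> x0 y n. int (d x p) - int (d y p) = c"
    and b: "b \<in> ball_n E x0 n"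
  shows "int (d x b) - int (d y b) = c"
proof -
  have lb: "lev E x0 b \<le> n" using b unfolding ball_n_def by simp
  obtain q where q: "q \<in> proximal E \<delta> x0 x n" "d x b = d x q + d q b"
    using proximal_on_geodesic_to_ball[OF thin Dd lx lb] by blast
  obtain q' where q': "q' \<in> proximal E \<delta> x0 y n" "d y b = d y q' + d q' b"
    using proximal_on_geodesic_to_ball[OF thin Dd ly lb] by blast
  have "int (d x q) - int (d y q) = c" "int (d x q') - int (d y q') = c"
    using c q(1) q'(1) sub by blast+
  moreover have "d y b \<le> d y q + d q b" "d x b \<le> d x q' + d q' b" by (rule dist_triangle)+
  ultimately show ?thesis using q(2) q'(2) by linarith
qed

lemma dist_diff_const_iff_cones_proximal:
  assumes thin: "thin_triangles E D" and Dd: "real D \<le> \<delta>" and ly: "n \<le> lev E x0 y"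
  shows "(\<exists>c::int. \<forall>b\<in>ball_n E x0 n. int (d x b) - int (d y b) = c) \<longleftrightarrow>
    (\<forall>p \<in> nearest E y (ball_n E x0 n). x \<in> cone E x0 p) \<and>
    (\<exists>c::int. \<forall>p \<in> proximal E \<delta> x0 y n. int (d x p) - int (d y p) = c)"
    (is "?const_on_ball \<longleftrightarrow> ?cones \<and> ?const_on_proximal")
proof
  assume ?const_on_ball
  moreover have "proximal E \<delta> x0 y n \<subseteq> ball_n E x0 n"
    unfolding proximal_def ball_n_def sphere_n_def by auto
  ultimately show "?cones \<and> ?const_on_proximal"
    using cone_if_dist_diff_const[OF ly] by blast
next
  assume cones: "?cones \<and> ?const_on_proximal"
  obtain g where g: "geodesic E x0 y g" using geodesic_exists by blast
  then have "lev E x0 (g ! n) = n" "g ! n \<in> nearest E y (ball_n E x0 n)"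
    using geodesic_nth_nearest[OF g ly] nearest_ball_on_sphere[OF ly] by auto
  then have "n \<le> lev E x0 x" using cones unfolding cone_def by force
  then show ?const_on_ball
    using dist_diff_const_on_ball[OF thin Dd _ ly proximal_subset_if_cones[OF ly]] cones by blast
qed

end

theorem mainTheorem17:
  fixes E :: "'a \<Rightarrow> 'a \<Rightarrow> bool" and \<delta> :: real and x0 :: 'a and n :: nat
    and A :: "'a set" and x :: 'a
  assumes sym: "\<And>u v. E u v \<Longrightarrow> E v u"
    and lf: "locally_finite E"
    and conn: "connected_graph E"
    and hyp: "hyperbolic E \<delta>"
    and A: "A \<in> inf_atoms E x0 n"
  shows "x \<in> A \<longleftrightarrow>
    ((\<forall>p \<in> nearest_atom E A (ball_n E x0 n). x \<in> cone E x0 p) \<and>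
     (\<exists>c::int. \<forall>p \<in> proximal_atom E \<delta> x0 A n.
        int (dist_g E x p) - int (dist_atom E A p) = c))"
proof -
  interpret connected_ugraph E using sym conn by unfold_locales
  obtain z0 where Aeq: "A = atom E (ball_n E x0 n) z0" and inf: "infinite A"
    using A unfolding inf_atoms_def atoms_def by blast
  define y where "y = (SOME y. y \<in> A)"
  have yA: "y \<in> A" unfolding y_def using inf by (metis infinite_imp_nonempty some_in_eq)
  have ly: "n \<le> lev E x0 y" using infinite_atom_outside_ball inf yA Aeq by blast
  have thin: "thin_triangles E (nat \<lfloor>\<delta>\<rfloor>)" and Dd: "real (nat \<lfloor>\<delta>\<rfloor>) \<le> \<delta>"
    using hyperbolic_thin_triangles[OF hyp] hyperbolic_nonneg[OF hyp] by auto
  have "x \<in> A \<longleftrightarrow> (\<exists>c::int. \<forall>b\<in>ball_n E x0 n. int (d x b) - int (d y b) = c)"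
    using atom_iff_dist_diff_const yA Aeq by blast
  then show ?thesis
    using dist_diff_const_iff_cones_proximal[OF thin Dd ly]
    unfolding nearest_atom_def proximal_atom_def dist_atom_def y_def[symmetric] by blast
qed

end
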